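(* Let $(S,\mathrm{dist})$ be a finite metric space with $\operatorname{diam}(S)=1$, partitioned as $S=S_+\cup S_-$, with margin $\gamma=\min_{x\in S_+,y\in S_-}\mathrm{dist}(x,y)\in(0,1)$. Let $N_0\subset S$ be a $\gamma$-net of $S$. Run the following pruning procedure on a set $N$ initialized to $N_0$: for $i=0,-1,-2,\dots,\lceil\log_2\gamma\rceil$ (in this order), and for each point $p$ that is in the current set $N$ (processed one at a time), if the distance from $p$ to every point of $N$ with label opposite to that of $p$ is at least $2\cdot 2^i$ (vacuously true if there is no such point), then remove from $N$ every point $q\neq p$ with $\mathrm{dist}(p,q)<2^i-\gamma$. Then the final set $N$ is consistent with $S$.
   Context: A $\gamma$-net of $S$ is a subset $N_0\subset S$ whose distinct points are pairwise at distance $\ge\gamma$ and such that every point of $S$ is at distance strictly less than $\gamma$ from some point of $N_0$. A subset $S'\subset S$ is consistent with $S$ if for every $p\in S$, every nearest neighbor of $p$ in $S'$ belongs to the same class ($S_+$ or $S_-$) as $p$. *)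

theory Defs
  imports "HOL-Analysis.Analysis"
begin

definition is_net :: "real \<Rightarrow> 'a::metric_space set \<Rightarrow> 'a set \<Rightarrow> bool" where
  "is_net \<gamma> S N0 \<longleftrightarrow> N0 \<subseteq> S
     \<and> (\<forall>x\<in>N0. \<forall>y\<in>N0. x \<noteq> y \<longrightarrow> dist x y \<ge> \<gamma>)
     \<and> (\<forall>p\<in>S. \<exists>x\<in>N0. dist p x < \<gamma>)"

definition nearest_neighbor :: "'a::metric_space set \<Rightarrow> 'a \<Rightarrow> 'a \<Rightarrow> bool" where
  "nearest_neighbor S' p q \<longleftrightarrow> q \<in> S' \<and> (\<forall>q'\<in>S'. dist p q \<le> dist p q')"

definition consistent :: "'a::metric_space set \<Rightarrow> 'a set \<Rightarrow> 'a set \<Rightarrow> bool" where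
  "consistent Sp Sm S' \<longleftrightarrow>
     (\<forall>p\<in>Sp \<union> Sm. \<forall>q. nearest_neighbor S' p q \<longrightarrow>
        ((p \<in> Sp \<and> q \<in> Sp) \<or> (p \<in> Sm \<and> q \<in> Sm)))"

definition opposite :: "'a set \<Rightarrow> 'a set \<Rightarrow> 'a \<Rightarrow> 'a set" where
  "opposite Sp Sm p = (if p \<in> Sp then Sm else Sp)"

definition process_point :: "real \<Rightarrow> 'a::metric_space set \<Rightarrow> 'a set \<Rightarrow> int \<Rightarrow> 'a set \<Rightarrow> 'a \<Rightarrow> 'a set" where
  "process_point \<gamma> Sp Sm i N p =
     (if p \<in> N \<and> (\<forall>q\<in>N \<inter> opposite Sp Sm p. dist p q \<ge> 2 * 2 powr (real_of_int i))
      then N - {q. q \<noteq> p \<and> dist p q < 2 powr (real_of_int i) - \<gamma>}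
      else N)"

definition prune_round :: "real \<Rightarrow> 'a::metric_space set \<Rightarrow> 'a set \<Rightarrow> int \<Rightarrow> 'a list \<Rightarrow> 'a set \<Rightarrow> 'a set" where
  "prune_round \<gamma> Sp Sm i ps N = foldl (process_point \<gamma> Sp Sm i) N ps"

text \<open>pruning_run \<gamma> Sp Sm c i N N': starting with N at round i, running rounds
  i, i-1, ..., c (for arbitrary processing orders of the points present at the
  start of each round) can end with N'.\<close>
inductive pruning_run :: "real \<Rightarrow> 'a::metric_space set \<Rightarrow> 'a set \<Rightarrow> int \<Rightarrow> int \<Rightarrow> 'a set \<Rightarrow> 'a set \<Rightarrow> bool"
  for \<gamma> Sp Sm c where
  stop: "i < c \<Longrightarrow> pruning_run \<gamma> Sp Sm c i N N"
| step: "\<lbrakk>c \<le> i; distinct ps; set ps = N;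
          pruning_run \<gamma> Sp Sm c (i - 1) (prune_round \<gamma> Sp Sm i ps N) N'\<rbrakk>
         \<Longrightarrow> pruning_run \<gamma> Sp Sm c i N N'"

end

theory Submission
  imports Defs
begin

(* A point x of the initial net N0 that has been pruned is "guarded" by a
   surviving point p of the same label and a radius r: x lies within r - \<gamma> of p, every
   surviving point of the opposite label is at distance \<ge> 2r from p, and every other
   surviving point is at distance \<ge> r - \<gamma> from p.  The invariant of the procedure is that
   the current set N is contained in N0 and every point of N0 \<setminus> N is guarded by a radius
   at least the current scale R = 2^i.  Pruning around p in round i guards the points it
   removes by p itself with radius 2^i, and it never removes an existing guard, since a
   guard with radius r \<ge> 2^i is at distance \<ge> r - \<gamma> \<ge> 2^i - \<gamma> from all other survivors.
   Consistency then follows from the invariant alone: a point s of S has a net point x of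
   its own label within \<gamma>; if x survived, it beats every point of the opposite label
   (which is at distance \<ge> \<gamma> by the margin), and otherwise its guard p is within r of s
   while opposite-labelled survivors are at distance \<ge> 2r from p, hence \<ge> r from s. *)

definition guarded_by :: "real \<Rightarrow> 'a::metric_space set \<Rightarrow> 'a set \<Rightarrow> real \<Rightarrow> 'a set \<Rightarrow> 'a \<Rightarrow> 'a \<Rightarrow> real \<Rightarrow> bool" where
  "guarded_by \<gamma> Sp Sm R N x p r \<longleftrightarrow> p \<in> N \<and> R \<le> r \<and> dist p x < r - \<gamma> \<and> (p \<in> Sp \<longleftrightarrow> x \<in> Sp)
     \<and> (\<forall>q\<in>N \<inter> opposite Sp Sm p. 2 * r \<le> dist p q)
     \<and> (\<forall>q\<in>N. q \<noteq> p \<longrightarrow> r - \<gamma> \<le> dist p q)"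

definition prune_invariant :: "real \<Rightarrow> 'a::metric_space set \<Rightarrow> 'a set \<Rightarrow> 'a set \<Rightarrow> real \<Rightarrow> 'a set \<Rightarrow> bool" where
  "prune_invariant \<gamma> Sp Sm N0 R N \<longleftrightarrow>
     N \<subseteq> N0 \<and> (\<forall>x\<in>N0. x \<in> N \<or> (\<exists>p r. guarded_by \<gamma> Sp Sm R N x p r))"

lemma prune_invariant_smaller_scale:
  assumes "R' \<le> R" "prune_invariant \<gamma> Sp Sm N0 R N"
  shows "prune_invariant \<gamma> Sp Sm N0 R' N"
proof -
  have "guarded_by \<gamma> Sp Sm R' N x p r" if "guarded_by \<gamma> Sp Sm R N x p r" for x p r
    using that assms(1) unfolding guarded_by_def by simp
  with assms(2) show ?thesis unfolding prune_invariant_def by blast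
qed

lemma guarded_by_subset:
  "guarded_by \<gamma> Sp Sm R N x p r \<Longrightarrow> N' \<subseteq> N \<Longrightarrow> p \<in> N' \<Longrightarrow> guarded_by \<gamma> Sp Sm R N' x p r"
  unfolding guarded_by_def by blast

lemma process_point_subset: "process_point \<gamma> Sp Sm i N p \<subseteq> N"
  unfolding process_point_def by auto

text \<open>A point removed while processing p is guarded by p with radius 2^i: it lies within
  2^i - \<gamma> of p, so it cannot carry the opposite label (those are \<ge> 2 \<cdot> 2^i away).\<close>
lemma removed_point_guarded:
  assumes x: "x \<in> N - process_point \<gamma> Sp Sm i N p" "x \<in> Sp \<union> Sm" and "0 \<le> \<gamma>"
  shows "guarded_by \<gamma> Sp Sm (2 powr i) (process_point \<gamma> Sp Sm i N p) x p (2 powr i)"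
proof -
  define R where "R = 2 powr real_of_int i"
  have qual: "p \<in> N" "\<forall>q\<in>N \<inter> opposite Sp Sm p. 2 * R \<le> dist p q"
    and N': "process_point \<gamma> Sp Sm i N p = N - {q. q \<noteq> p \<and> dist p q < R - \<gamma>}"
    using x(1) unfolding process_point_def R_def by (auto split: if_splits)
  have close: "x \<noteq> p" "dist p x < R - \<gamma>" using x(1) unfolding N' by auto
  have "p \<in> Sp \<longleftrightarrow> x \<in> Sp"
  proof (rule ccontr)
    assume "\<not> (p \<in> Sp \<longleftrightarrow> x \<in> Sp)"
    with x(2) have "x \<in> opposite Sp Sm p" unfolding opposite_def by auto
    with qual x(1) have "2 * R \<le> dist p x" by blast
    moreover have "R > 0" unfolding R_def by simp
    ultimately show False using close \<open>0 \<le> \<gamma>\<close> by linarith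
  qed
  with qual close show ?thesis
    unfolding guarded_by_def N' R_def[symmetric] by auto
qed

lemma guard_survives_processing:
  assumes "guarded_by \<gamma> Sp Sm (2 powr i) N x p0 r"
  shows "guarded_by \<gamma> Sp Sm (2 powr i) (process_point \<gamma> Sp Sm i N p) x p0 r"
proof -
  have "p0 \<in> process_point \<gamma> Sp Sm i N p"
  proof (rule ccontr)
    assume "p0 \<notin> process_point \<gamma> Sp Sm i N p"
    with assms have "p \<in> N" "p0 \<noteq> p" "dist p p0 < 2 powr i - \<gamma>"
      unfolding guarded_by_def process_point_def by (auto split: if_splits)
    with assms show False unfolding guarded_by_def by (auto simp: dist_commute)
  qed
  with assms process_point_subset show ?thesis by (rule guarded_by_subset)
qed

lemma prune_invariant_process:
  assumes inv: "prune_invariant \<gamma> Sp Sm N0 (2 powr i) N" and "0 \<le> \<gamma>" and N0: "N0 \<subseteq> Sp \<union> Sm"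
  shows "prune_invariant \<gamma> Sp Sm N0 (2 powr i) (process_point \<gamma> Sp Sm i N p)"
  unfolding prune_invariant_def
proof (intro conjI ballI)
  show "process_point \<gamma> Sp Sm i N p \<subseteq> N0"
    using inv process_point_subset unfolding prune_invariant_def by blast
next
  fix x assume x: "x \<in> N0"
  show "x \<in> process_point \<gamma> Sp Sm i N p
    \<or> (\<exists>p' r. guarded_by \<gamma> Sp Sm (2 powr i) (process_point \<gamma> Sp Sm i N p) x p' r)"
  proof (cases "x \<in> N")
    case True
    with x N0 removed_point_guarded[of x N \<gamma> Sp Sm i p] \<open>0 \<le> \<gamma>\<close> show ?thesis by blast
  next
    case False
    with inv x obtain p0 r where "guarded_by \<gamma> Sp Sm (2 powr i) N x p0 r"
      unfolding prune_invariant_def by blast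
    then show ?thesis using guard_survives_processing by blast
  qed
qed

lemma prune_invariant_round:
  assumes "prune_invariant \<gamma> Sp Sm N0 (2 powr i) N" "0 \<le> \<gamma>" "N0 \<subseteq> Sp \<union> Sm"
  shows "prune_invariant \<gamma> Sp Sm N0 (2 powr i) (prune_round \<gamma> Sp Sm i ps N)"
  using assms(1) unfolding prune_round_def
proof (induction ps arbitrary: N)
  case (Cons p ps)
  then show ?case using prune_invariant_process[OF _ assms(2,3)] by simp
qed simp

lemma prune_invariant_run:
  assumes "pruning_run \<gamma> Sp Sm c i N N'" "prune_invariant \<gamma> Sp Sm N0 (2 powr i) N"
    and "0 \<le> \<gamma>" "N0 \<subseteq> Sp \<union> Sm"
  shows "\<exists>R. prune_invariant \<gamma> Sp Sm N0 R N'"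
  using assms(1,2)
proof (induction rule: pruning_run.induct)
  case (step i ps N N')
  have "prune_invariant \<gamma> Sp Sm N0 (2 powr i) (prune_round \<gamma> Sp Sm i ps N)"
    using prune_invariant_round[OF step.prems assms(3,4)] .
  moreover have "2 powr real_of_int (i - 1) \<le> 2 powr real_of_int i" by simp
  ultimately show ?case using step.IH prune_invariant_smaller_scale by blast
qed blast

lemma prune_invariant_consistent:
  assumes inv: "prune_invariant \<gamma> Sp Sm N0 R N"
    and N0: "N0 \<subseteq> Sp \<union> Sm" and cover: "\<forall>s\<in>Sp \<union> Sm. \<exists>x\<in>N0. dist s x < \<gamma>"
    and margin: "\<And>a b. a \<in> Sp \<Longrightarrow> b \<in> Sm \<Longrightarrow> \<gamma> \<le> dist a b"
    and disj: "Sp \<inter> Sm = {}"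
  shows "consistent Sp Sm N"
  unfolding consistent_def
proof (intro ballI allI impI)
  fix s q assume s: "s \<in> Sp \<union> Sm" and "nearest_neighbor N s q"
  then have qN: "q \<in> N" and nearest: "\<And>q'. q' \<in> N \<Longrightarrow> dist s q \<le> dist s q'"
    unfolding nearest_neighbor_def by auto
  have qS: "q \<in> Sp \<union> Sm" using qN inv N0 unfolding prune_invariant_def by blast
  have separated: "\<gamma> \<le> dist a b" if "a \<in> Sp \<union> Sm" "b \<in> Sp \<union> Sm" "a \<in> Sp \<longleftrightarrow> b \<notin> Sp" for a b
    using that margin[of a b] margin[of b a] by (auto simp: dist_commute)
  show "(s \<in> Sp \<and> q \<in> Sp) \<or> (s \<in> Sm \<and> q \<in> Sm)"
  proof (rule ccontr)
    assume bad: "\<not> ((s \<in> Sp \<and> q \<in> Sp) \<or> (s \<in> Sm \<and> q \<in> Sm))"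
    with s qS have sq: "\<gamma> \<le> dist s q" by (intro separated) auto
    obtain x where x: "x \<in> N0" "dist s x < \<gamma>" using cover s by blast
    with N0 s separated[of s x] have xlab: "x \<in> Sp \<longleftrightarrow> s \<in> Sp" by force
    from inv x(1) consider "x \<in> N" | p r where "guarded_by \<gamma> Sp Sm R N x p r"
      unfolding prune_invariant_def by blast
    then show False
    proof cases
      case 1
      then have "dist s q \<le> dist s x" by (rule nearest)
      with x(2) sq show False by linarith
    next
      case 2
      then have pN: "p \<in> N" and px: "dist p x < r - \<gamma>" and plab: "p \<in> Sp \<longleftrightarrow> x \<in> Sp"
        and far: "\<forall>q\<in>N \<inter> opposite Sp Sm p. 2 * r \<le> dist p q"
        unfolding guarded_by_def by auto
      have "q \<in> opposite Sp Sm p"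
        using bad plab xlab qS s disj unfolding opposite_def by auto
      with far qN have "2 * r \<le> dist p q" by blast
      moreover have "dist s p < r"
        using dist_triangle[of s p x] px x(2) by (simp add: dist_commute)
      moreover have "dist s q \<le> dist s p" using nearest pN .
      moreover have "dist p q \<le> dist p s + dist s q" by (rule dist_triangle)
      ultimately show False by (simp add: dist_commute)
    qed
  qed
qed

lemma margin_le_dist:
  assumes "finite (Sp \<union> Sm)" "a \<in> Sp" "b \<in> Sm"
  shows "Min {dist x y | x y. x \<in> Sp \<and> y \<in> Sm} \<le> dist a b"
proof (rule Min_le)
  have "{dist x y | x y. x \<in> Sp \<and> y \<in> Sm} = (\<lambda>(x, y). dist x y) ` (Sp \<times> Sm)" by auto
  then show "finite {dist x y | x y. x \<in> Sp \<and> y \<in> Sm}" using assms(1) by simp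
qed (use assms in blast)

theorem lemma1:
  fixes S Sp Sm N0 N :: "'a::metric_space set" and \<gamma> :: real
  assumes "finite S"
    and "diameter S = 1"
    and "S = Sp \<union> Sm" and "Sp \<inter> Sm = {}"
    and "Sp \<noteq> {}" and "Sm \<noteq> {}"
    and "\<gamma> = Min {dist x y | x y. x \<in> Sp \<and> y \<in> Sm}"
    and "0 < \<gamma>" and "\<gamma> < 1"
    and "is_net \<gamma> S N0"
    and "pruning_run \<gamma> Sp Sm \<lceil>log 2 \<gamma>\<rceil> 0 N0 N"
  shows "consistent Sp Sm N"
proof -
  have N0: "N0 \<subseteq> Sp \<union> Sm" and cover: "\<forall>s\<in>Sp \<union> Sm. \<exists>x\<in>N0. dist s x < \<gamma>"
    using assms(3,10) unfolding is_net_def by auto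
  have "prune_invariant \<gamma> Sp Sm N0 (2 powr real_of_int 0) N0"
    unfolding prune_invariant_def by blast
  then obtain R where "prune_invariant \<gamma> Sp Sm N0 R N"
    using prune_invariant_run[OF assms(11) _ _ N0] assms(8) by auto
  then show ?thesis
  proof (rule prune_invariant_consistent[OF _ N0 cover _ assms(4)])
    show "\<gamma> \<le> dist a b" if "a \<in> Sp" "b \<in> Sm" for a b
      using margin_le_dist[of Sp Sm a b] that assms(1,3,7) by simp
  qed
qed

end
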